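(* Let $n\ge1$, $k\ge1$, and let $\pi\in\mathbf{C}(n,k)$ be increasing. Let $\pi_2=q_1q_2\cdots q_n$ be any entry of the list $\mathcal{C}(\pi)$, and let $j\ge1$ be the largest integer such that the prefix $q_1q_2\cdots q_j$ is a decreasing pre-perm. Then the successor of $\pi_2$ in $\mathcal{C}(\pi)$, considered cyclically (the successor of the last entry being the first entry), is $\mathrm{flip}_j(\pi_2)$.
   Context: Fix integers $n\ge1$, $k\ge1$. A $k$-coloured permutation of $\{1,\dots,n\}$ is a sequence $\pi=p_1\cdots p_n$ with $p_i=v_i^{c_i}$, where $v_1\cdots v_n$ is a permutation of $\{1,\dots,n\}$ and each $c_i\in\{0,\dots,k-1\}$; the set of these is $\mathbf{C}(n,k)$. A pre-perm is a prefix $p_1\cdots p_j$ ($1\le j\le n$) of some element of $\mathbf{C}(n,k)$. For $p=v^c$ and integer $s$, $p^{+s}=v^{(c+s)\bmod k}$; for $\mathbf{p}=p_1\cdots p_j$, $\mathbf{p}^{+s}=p_1^{+s}\cdots p_j^{+s}$. For $1\le i\le n$, $\mathrm{flip}_i(p_1\cdots p_n)=p_i^{+1}\cdots p_1^{+1}p_{i+1}\cdots p_n$. For a pre-perm $\mathbf{p}$ of length $j$, $\rho(\mathbf{p})=r_1\cdots r_m$ ($m=kj$) is the concatenation $\mathbf{p}^{+(k-1)}\mathbf{p}^{+(k-2)}\cdots\mathbf{p}^{+0}$ viewed circularly (indices mod $m$), and $\rho(\mathbf{p})_i=r_{i-j+1}\cdots r_{i-1}$ (length $j-1$, indices mod $m$).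 The list $\mathcal{C}(\mathbf{p})$: if $j=1$, $\mathcal{C}(p_1)=p_1^{+0},\dots,p_1^{+(k-1)}$; if $j\ge2$, $\mathcal{C}(\mathbf{p})$ is the concatenation for $i=m,m-1,\dots,1$ of the lists obtained from $\mathcal{C}(\rho(\mathbf{p})_i)$ by appending $r_i$ to every entry. Writing $\rho(1^02^0\cdots n^0)=r_1\cdots r_{nk}$ (circular), an element of $\mathbf{C}(n,k)$ is increasing if it equals $r_ir_{i+1}\cdots r_{i+n-1}$ (indices mod $nk$) for some $i$, and decreasing if it is the reverse (order reversed, colours unchanged) of an increasing element. A pre-perm is increasing (resp. decreasing) if it is a (not necessarily contiguous) subsequence of some increasing (resp. decreasing) element of $\mathbf{C}(n,k)$. *)

theory Defs
  imports Main "HOL-Library.Sublist"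
begin

text \<open>A coloured entry v^c is represented as the pair (v, c).\<close>
type_synonym centry = "nat \<times> nat"

definition cperms :: "nat \<Rightarrow> nat \<Rightarrow> centry list set" where
  "cperms n k = {p. length p = n \<and> distinct (map fst p) \<and> set (map fst p) = {1..n}
                   \<and> (\<forall>x\<in>set p. snd x < k)}"

definition preperm :: "nat \<Rightarrow> nat \<Rightarrow> centry list \<Rightarrow> bool" where
  "preperm n k q \<longleftrightarrow> (\<exists>p\<in>cperms n k. \<exists>j. 1 \<le> j \<and> j \<le> n \<and> q = take j p)"

definition cshift :: "nat \<Rightarrow> int \<Rightarrow> centry \<Rightarrow> centry" where
  "cshift k s x = (fst x, nat ((int (snd x) + s) mod int k))"

definition cshiftl :: "nat \<Rightarrow> int \<Rightarrow> centry list \<Rightarrow> centry list" where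
  "cshiftl k s p = map (cshift k s) p"

definition flip :: "nat \<Rightarrow> nat \<Rightarrow> centry list \<Rightarrow> centry list" where
  "flip k i p = rev (cshiftl k 1 (take i p)) @ drop i p"

text \<open>rho(p) = p^{+(k-1)} p^{+(k-2)} ... p^{+0}, as a list r_1..r_m (stored 0-based)\<close>
definition rho :: "nat \<Rightarrow> centry list \<Rightarrow> centry list" where
  "rho k p = concat (map (\<lambda>t. cshiftl k (int (k - 1 - t)) p) [0..<k])"

text \<open>circular 1-based access r_t, t an integer, indices mod m\<close>
definition rget :: "nat \<Rightarrow> centry list \<Rightarrow> int \<Rightarrow> centry" where
  "rget k p t = rho k p ! nat ((t - 1) mod int (length (rho k p)))"

definition rho_sub :: "nat \<Rightarrow> centry list \<Rightarrow> nat \<Rightarrow> centry list" where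
  "rho_sub k p i = map (\<lambda>d. rget k p (int i - int (length p) + int d)) [1..<length p]"

lemma length_rho_sub: "length (rho_sub k p i) = length p - 1"
  by (simp add: rho_sub_def)

function clist :: "nat \<Rightarrow> centry list \<Rightarrow> centry list list" where
  "clist k p = (if length p \<le> 1 then map (\<lambda>s. cshiftl k (int s) p) [0..<k]
     else concat (map (\<lambda>i. map (\<lambda>q. q @ [rget k p (int i)]) (clist k (rho_sub k p i)))
                      (rev [1..<k * length p + 1])))"
  by pat_completeness auto
termination
  by (relation "measure (\<lambda>(k, p). length p)") (auto simp: length_rho_sub)

declare clist.simps[simp del]

definition idperm :: "nat \<Rightarrow> centry list" where
  "idperm n = map (\<lambda>v. (v, 0)) [1..<n + 1]"

definition increasing :: "nat \<Rightarrow> nat \<Rightarrow> centry list \<Rightarrow> bool" where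
  "increasing n k p \<longleftrightarrow>
     (\<exists>i::int. p = map (\<lambda>d. rget k (idperm n) (i + int d)) [0..<n])"

definition decreasing :: "nat \<Rightarrow> nat \<Rightarrow> centry list \<Rightarrow> bool" where
  "decreasing n k p \<longleftrightarrow> increasing n k (rev p)"

definition increasing_pre :: "nat \<Rightarrow> nat \<Rightarrow> centry list \<Rightarrow> bool" where
  "increasing_pre n k q \<longleftrightarrow> preperm n k q \<and> (\<exists>p. increasing n k p \<and> subseq q p)"

definition decreasing_pre :: "nat \<Rightarrow> nat \<Rightarrow> centry list \<Rightarrow> bool" where
  "decreasing_pre n k q \<longleftrightarrow> preperm n k q \<and> (\<exists>p. decreasing n k p \<and> subseq q p)"

end

theory Submission
  imports Defs
begin

text \<open>
  Unrolling rho(p) gives a bi-infinite word W, and rho(p)_i followed by r_i is a window of |p|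
  consecutive letters of W; whether a word is a decreasing pre-perm does not change when the
  base permutation is replaced by such a window. By the recursive definition, C(p) consists of
  k|p| blocks, the i-th being C(rho(p)_i) with r_i appended. By induction on |p|, C(p) starts
  with p, ends with the reverse of p^{+(-1)}, and every entry is followed by its flip at the
  length of its longest decreasing prefix. Inside a block this is inherited from
  C(rho(p)_i): deleting the last letter r_i of the window does not affect decreasingness of
  words avoiding it, and the word with r_i appended can only be decreasing as a whole at the
  last entry of the block. Between blocks, the last entry of block i + 1 is a reversed
  window, which is decreasing as a whole, and its full flip is the first entry of block i.
\<close>

lemma subseq_remove_notin:
  assumes "subseq xs (ys @ y # zs)" "y \<notin> set xs"
  shows "subseq xs (ys @ zs)"
proof -
  obtain xs1 xs2 where x: "xs = xs1 @ xs2" "subseq xs1 ys" "subseq xs2 (y # zs)"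
    by (rule subseq_appendE[OF assms(1)])
  have "subseq xs2 zs"
  proof (cases xs2)
    case (Cons a as)
    then have "a \<noteq> y" using assms(2) x(1) by auto
    then show ?thesis using x(3) Cons subseq_Cons2_neq by metis
  qed simp
  then show ?thesis unfolding x(1) by (rule list_emb_append_mono[OF x(2)])
qed

lemma subseq_insert: "subseq (ys @ zs) (ys @ y # zs)"
  unfolding subseq_append' by (rule list_emb_Cons) (rule subseq_order.order_refl)

lemma int_eq_mult_add_nat:
  assumes "0 < j"
  obtains m c where "s = int j * m + int c" "c < j"
proof
  show "s = int j * (s div int j) + int (nat (s mod int j))" using assms by simp
  show "nat (s mod int j) < j" using assms by (simp add: nat_less_iff)
qed

lemma concat_map_blocks:
  "concat (map (\<lambda>u. map (\<lambda>d. h (u * j + d)) [0..<j]) [0..<K]) = map h [0..<K * j]"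
proof (induction K)
  case (Suc K)
  have "[0..<Suc K * j] = [0..<K * j] @ [K * j..<K * j + j]"
    by (metis add.commute mult_Suc upt_add_eq_append zero_le)
  moreover have "map h [K * j..<K * j + j] = map (\<lambda>d. h (K * j + d)) [0..<j]"
    by (rule nth_equalityI) auto
  ultimately show ?case using Suc.IH by simp
qed simp

lemma successively_concat:
  assumes "\<forall>xs\<in>set xss. xs \<noteq> []" "\<forall>xs\<in>set xss. successively P xs"
    and "successively (\<lambda>xs ys. P (last xs) (hd ys)) xss"
  shows "successively P (concat xss)"
  using assms
proof (induction xss)
  case (Cons xs xss)
  then show ?case
    by (cases xss) (auto simp: successively_append_iff successively_Cons)
qed simp

lemma successively_not_last:
  assumes "distinct xs" "successively P xs"
  shows "successively (\<lambda>x y. P x y \<and> x \<noteq> last xs) xs"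
  unfolding successively_conv_nth
proof (intro allI impI conjI)
  fix i assume i: "Suc i < length xs"
  then show "P (xs ! i) (xs ! Suc i)" using assms(2) by (rule successively_nth[rotated])
  have "xs \<noteq> []" using i by auto
  then have "last xs = xs ! (length xs - 1)" by (simp add: last_conv_nth)
  then show "xs ! i \<noteq> last xs" using i nth_eq_iff_index_eq[OF assms(1)] by simp
qed

section \<open>Colour shifts and the unrolled word\<close>

definition colours_below :: "nat \<Rightarrow> centry list \<Rightarrow> bool" where
  "colours_below k p \<longleftrightarrow> (\<forall>x\<in>set p. snd x < k)"

lemma fst_cshift [simp]: "fst (cshift k s e) = fst e"
  by (simp add: cshift_def)

lemma snd_cshift_less: "0 < k \<Longrightarrow> snd (cshift k s e) < k"
  by (simp add: cshift_def nat_less_iff)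

lemma cshift_cshift: "0 < k \<Longrightarrow> cshift k a (cshift k b e) = cshift k (a + b) e"
  by (simp add: cshift_def mod_add_right_eq ac_simps)

lemma cshift_0: "snd e < k \<Longrightarrow> cshift k 0 e = e"
  by (cases e) (simp add: cshift_def)

lemma cshift_cong: "a mod int k = b mod int k \<Longrightarrow> cshift k a e = cshift k b e"
  unfolding cshift_def by (metis mod_add_right_eq)

lemma cshift_eq_iff:
  assumes "0 < k"
  shows "cshift k a e = cshift k b e \<longleftrightarrow> a mod int k = b mod int k"
proof
  assume "cshift k a e = cshift k b e"
  then have "(int (snd e) + a) mod int k = (int (snd e) + b) mod int k"
    using assms by (simp add: cshift_def eq_nat_nat_iff)
  then have "(int (snd e) + a - int (snd e)) mod int k = (int (snd e) + b - int (snd e)) mod int k"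
    by (rule mod_diff_cong) simp
  then show "a mod int k = b mod int k" by simp
qed (rule cshift_cong)

lemma cshift_mult: "snd e < k \<Longrightarrow> cshift k (int k * m) e = e"
  using cshift_cong[of "int k * m" k 0 e] by (simp add: cshift_0)

lemma cshift_minus_one: "cshift k (int k - 1) e = cshift k (-1) e"
  by (rule cshift_cong) (simp add: mod_eq_dvd_iff)

text \<open>cyc k p enumerates the bi-infinite word ... p^{+1} p p^{+(-1)} p^{+(-2)} ..., with p at
  positions 0 .. |p| - 1; rho(p) is its period starting at position |p| (rho_eq_map_cyc).\<close>

definition cyc :: "nat \<Rightarrow> centry list \<Rightarrow> int \<Rightarrow> centry" where
  "cyc k p t = cshift k (- (t div int (length p))) (p ! nat (t mod int (length p)))"

definition window :: "nat \<Rightarrow> centry list \<Rightarrow> int \<Rightarrow> nat \<Rightarrow> centry list" where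
  "window k p s l = map (\<lambda>d. cyc k p (s + int d)) [0..<l]"

lemma snd_cyc_less: "0 < k \<Longrightarrow> snd (cyc k p t) < k"
  by (simp add: cyc_def snd_cshift_less)

lemma cyc_add_mult:
  assumes "p \<noteq> []" "0 < k"
  shows "cyc k p (t + int (length p) * m) = cshift k (- m) (cyc k p t)"
proof -
  have "(t + int (length p) * m) div int (length p) = t div int (length p) + m"
    using assms by simp
  then show ?thesis
    using assms(2) by (simp add: cyc_def cshift_cshift algebra_simps)
qed

lemma cyc_of_nat:
  assumes "colours_below k p" "d < length p"
  shows "cyc k p (int d) = p ! d"
  using assms by (simp add: cyc_def colours_below_def cshift_0)

lemma cyc_period:
  assumes "p \<noteq> []" "0 < k"
  shows "cyc k p (t + int (length p * k) * m) = cyc k p t"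
  using cyc_add_mult[OF assms, of t "int k * m"] cshift_mult[OF snd_cyc_less[OF assms(2)], of "-m"]
  by (simp add: mult.assoc)

lemma cyc_eq_imp_period:
  assumes "p \<noteq> []" "0 < k" "distinct (map fst p)" "cyc k p s = cyc k p t"
  shows "\<exists>m. t = s + int (length p * k) * m"
proof -
  let ?j = "int (length p)"
  have ls: "nat (s mod ?j) < length p" and lt: "nat (t mod ?j) < length p"
    using assms(1) by (simp_all add: nat_less_iff)
  have "map fst p ! nat (s mod ?j) = map fst p ! nat (t mod ?j)"
    using arg_cong[OF assms(4), of fst] ls lt by (simp add: cyc_def)
  then have "nat (s mod ?j) = nat (t mod ?j)"
    using nth_eq_iff_index_eq[OF assms(3)] ls lt by simp
  then have r: "s mod ?j = t mod ?j" using assms(1) by (simp add: eq_nat_nat_iff)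
  then have "(- (s div ?j)) mod int k = (- (t div ?j)) mod int k"
    using assms(4) by (simp add: cyc_def cshift_eq_iff[OF assms(2)])
  then obtain m where m: "t div ?j - s div ?j = int k * m"
    by (metis minus_diff_commute mod_eq_dvd_iff dvdE)
  have "t = ?j * (t div ?j) + t mod ?j" by simp
  also have "\<dots> = s + int (length p * k) * m"
    using m r by (simp add: algebra_simps) (metis mult.commute mult_div_mod_eq add.commute)
  finally show ?thesis by blast
qed

lemma length_window [simp]: "length (window k p s l) = l"
  by (simp add: window_def)

lemma nth_window [simp]: "d < l \<Longrightarrow> window k p s l ! d = cyc k p (s + int d)"
  by (simp add: window_def)

lemma window_Suc: "window k p s (Suc l) = window k p s l @ [cyc k p (s + int l)]"
  by (simp add: window_def)

lemma window_Suc_Cons: "window k p s (Suc l) = cyc k p s # window k p (s + 1) l"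
  by (rule nth_equalityI) (auto simp: nth_Cons' ac_simps)

lemma colours_below_window: "0 < k \<Longrightarrow> colours_below k (window k p s l)"
  by (auto simp: colours_below_def window_def snd_cyc_less)

lemma window_0: "colours_below k p \<Longrightarrow> window k p 0 (length p) = p"
  by (rule nth_equalityI) (auto simp: cyc_of_nat)

lemma map_cshift_window:
  assumes "p \<noteq> []" "0 < k"
  shows "map (cshift k (- m)) (window k p s l) = window k p (s + int (length p) * m) l"
  by (rule nth_equalityI) (auto simp: cyc_add_mult[OF assms, symmetric] ac_simps)

lemma window_period:
  assumes "p \<noteq> []" "0 < k"
  shows "window k p (s + int (length p * k) * m) l = window k p s l"
  by (rule nth_equalityI) (auto simp: cyc_period[OF assms, of "s + int _" m, symmetric] ac_simps)

lemma cyc_window: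
  assumes "p \<noteq> []" "0 < k"
  shows "cyc k (window k p s (length p)) t = cyc k p (s + t)"
proof -
  let ?j = "int (length p)"
  have "nat (t mod ?j) < length p" using assms(1) by (simp add: nat_less_iff)
  then have "cyc k (window k p s (length p)) t = cshift k (- (t div ?j)) (cyc k p (s + t mod ?j))"
    using assms(1) by (simp add: cyc_def[of k "window k p s (length p)"])
  also have "\<dots> = cyc k p (s + t mod ?j + ?j * (t div ?j))"
    by (rule cyc_add_mult[OF assms, symmetric])
  also have "s + t mod ?j + ?j * (t div ?j) = s + t"
    by (simp add: algebra_simps)
  finally show ?thesis .
qed

lemma window_window:
  assumes "p \<noteq> []" "0 < k"
  shows "window k (window k p s (length p)) t l = window k p (s + t) l"
  by (rule nth_equalityI) (auto simp: cyc_window[OF assms] ac_simps)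

lemma window_of_nat:
  assumes "colours_below k p" "c \<le> length p" "0 < k"
  shows "window k p (int c) (length p) = drop c p @ map (cshift k (-1)) (take c p)"
proof (rule nth_equalityI)
  fix d assume "d < length (window k p (int c) (length p))"
  then have d: "d < length p" by simp
  then have pne: "p \<noteq> []" by auto
  show "window k p (int c) (length p) ! d = (drop c p @ map (cshift k (-1)) (take c p)) ! d"
  proof (cases "c + d < length p")
    case True
    then have "cyc k p (int c + int d) = p ! (c + d)"
      using cyc_of_nat[OF assms(1), of "c + d"] by simp
    moreover have "d < length (drop c p)" using True by simp
    ultimately show ?thesis using d by (simp add: nth_append)
  next
    case False
    then have e: "int c + int d = int (c + d - length p) + int (length p) * 1" by simp
    have "c + d - length p < length p" using d assms(2) by arith
    then have "cyc k p (int c + int d) = cshift k (-1) (p ! (c + d - length p))"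
      unfolding e cyc_add_mult[OF pne assms(3)] by (simp add: cyc_of_nat[OF assms(1)])
    moreover have "\<not> d < length p - c" "d - (length p - c) = c + d - length p"
      using False assms(2) by arith+
    ultimately show ?thesis using d assms(2) by (simp add: nth_append)
  qed
qed simp

lemma map_fst_window:
  assumes "p \<noteq> []" "0 < k" "colours_below k p"
  shows "map fst (window k p s (length p)) = rotate (nat (s mod int (length p))) (map fst p)"
proof -
  let ?j = "int (length p)"
  let ?c = "nat (s mod ?j)"
  have c: "?c < length p" using assms(1) by (simp add: nat_less_iff)
  have "s = int ?c + ?j * (s div ?j)" using assms(1) by simp
  then have "window k p s (length p) = map (cshift k (- (s div ?j))) (window k p (int ?c) (length p))"
    by (metis map_cshift_window[OF assms(1,2)])
  then have "map fst (window k p s (length p)) = map fst (window k p (int ?c) (length p))"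
    by (simp add: comp_def)
  also have "\<dots> = drop ?c (map fst p) @ take ?c (map fst p)"
    using window_of_nat[OF assms(3) _ assms(2), of ?c] c by (simp add: drop_map take_map comp_def)
  also have "\<dots> = rotate ?c (map fst p)"
    using c by (simp add: rotate_drop_take)
  finally show ?thesis .
qed

lemma distinct_map_fst_window:
  assumes "p \<noteq> []" "0 < k" "colours_below k p" "distinct (map fst p)"
  shows "distinct (map fst (window k p s (length p)))"
  using assms by (simp add: map_fst_window)

lemma fst_set_window:
  assumes "p \<noteq> []" "0 < k" "colours_below k p"
  shows "fst ` set (window k p s (length p)) = fst ` set p"
  using arg_cong[OF map_fst_window[OF assms, of s], of set] by simp

section \<open>Decreasing words relative to a base word\<close>

text \<open>Decreasing pre-perms with the identity replaced by an arbitrary base word p; the paper's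
  notion is the case p = idperm n (subseq_decreasing_iff).\<close>

definition decr_wrt :: "nat \<Rightarrow> centry list \<Rightarrow> centry list \<Rightarrow> bool" where
  "decr_wrt k p q \<longleftrightarrow> (\<exists>s. subseq q (rev (window k p s (length p))))"

definition max_decr_prefix :: "nat \<Rightarrow> centry list \<Rightarrow> centry list \<Rightarrow> nat \<Rightarrow> bool" where
  "max_decr_prefix k p a l \<longleftrightarrow> 1 \<le> l \<and> l \<le> length p \<and> decr_wrt k p (take l a) \<and>
     (\<forall>l'. l < l' \<and> l' \<le> length p \<longrightarrow> \<not> decr_wrt k p (take l' a))"

lemma decr_wrt_window:
  assumes "p \<noteq> []" "0 < k"
  shows "decr_wrt k (window k p s (length p)) q \<longleftrightarrow> decr_wrt k p q"
proof
  assume "decr_wrt k (window k p s (length p)) q"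
  then show "decr_wrt k p q" by (auto simp: decr_wrt_def window_window[OF assms])
next
  assume "decr_wrt k p q"
  then obtain t where "subseq q (rev (window k p t (length p)))"
    by (auto simp: decr_wrt_def)
  moreover have "window k (window k p s (length p)) (t - s) (length p) = window k p t (length p)"
    by (simp add: window_window[OF assms])
  ultimately show "decr_wrt k (window k p s (length p)) q"
    unfolding decr_wrt_def by (metis length_window)
qed

lemma window_butlast:
  fixes m :: int
  assumes "colours_below k u" "0 < k" "2 \<le> length u" "c < length u"
  defines "A \<equiv> map (cshift k (- m)) (drop c (butlast u))"
    and "B \<equiv> map (cshift k (- m)) (map (cshift k (-1)) (take c (butlast u)))"
  shows "window k u (int (length u) * m + int c) (length u) = A @ cshift k (- m) (last u) # B"
    and "window k (butlast u) (int (length u - 1) * m + int c) (length u - 1) = A @ B"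
proof -
  obtain v y where u: "u = v @ [y]" using assms(3) by (cases u rule: rev_cases) auto
  have une: "u \<noteq> []" and bne: "butlast u \<noteq> []" using assms(3) u by auto
  have cbl: "colours_below k (butlast u)"
    using assms(1) by (auto simp: colours_below_def dest: in_set_butlastD)
  have "window k u (int (length u) * m + int c) (length u) =
        map (cshift k (- m)) (drop c u @ map (cshift k (-1)) (take c u))"
    using map_cshift_window[OF une assms(2), of m "int c" "length u"]
      window_of_nat[OF assms(1) _ assms(2), of c] assms(4) by (simp add: add.commute)
  then show "window k u (int (length u) * m + int c) (length u) = A @ cshift k (- m) (last u) # B"
    using assms(4) unfolding A_def B_def u by simp
  have "window k (butlast u) (int (length u - 1) * m + int c) (length u - 1) =
        map (cshift k (- m)) (drop c (butlast u) @ map (cshift k (-1)) (take c (butlast u)))"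
    using map_cshift_window[OF bne assms(2), of m "int c" "length u - 1"]
      window_of_nat[OF cbl _ assms(2), of c] assms(4) by (simp add: add.commute)
  then show "window k (butlast u) (int (length u - 1) * m + int c) (length u - 1) = A @ B"
    unfolding A_def B_def by simp
qed

lemma decr_wrt_butlast:
  assumes "colours_below k u" "0 < k" "2 \<le> length u" "fst (last u) \<notin> fst ` set q"
  shows "decr_wrt k (butlast u) q \<longleftrightarrow> decr_wrt k u q"
proof
  assume "decr_wrt k (butlast u) q"
  then obtain s where s: "subseq q (rev (window k (butlast u) s (length u - 1)))"
    by (auto simp: decr_wrt_def)
  from assms(3) have "0 < length u - 1" by simp
  then obtain m c where sc: "s = int (length u - 1) * m + int c" and c: "c < length u - 1"
    by (rule int_eq_mult_add_nat)
  have "c < length u" using c by simp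
  note w = window_butlast[OF assms(1-3) this, of m]
  have "subseq q (rev (window k u (int (length u) * m + int c) (length u)))"
    using subseq_order.order_trans[OF s[unfolded sc w(2) rev_append] subseq_insert] w(1) by simp
  then show "decr_wrt k u q" unfolding decr_wrt_def by blast
next
  assume "decr_wrt k u q"
  then obtain s where s: "subseq q (rev (window k u s (length u)))"
    by (auto simp: decr_wrt_def)
  from assms(3) have "0 < length u" by linarith
  then obtain m c where sc: "s = int (length u) * m + int c" and c: "c < length u"
    by (rule int_eq_mult_add_nat)
  note w = window_butlast[OF assms(1-3) c, of m]
  have "cshift k (- m) (last u) \<notin> set q" using assms(4) by (metis fst_cshift image_eqI)
  then have "subseq q (rev (window k (butlast u) (int (length u - 1) * m + int c) (length u - 1)))"
    using subseq_remove_notin[of q] s[unfolded sc w(1)] unfolding w(2) by simp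
  then show "decr_wrt k (butlast u) q" unfolding decr_wrt_def by (metis length_butlast)
qed

section \<open>The recursion of C(p) in terms of windows\<close>

lemma rho_eq_map_cyc:
  assumes "p \<noteq> []" "0 < k" "colours_below k p"
  shows "rho k p = map (\<lambda>n. cyc k p (int (length p) + int n)) [0..<k * length p]"
proof -
  let ?j = "length p"
  have block: "cshiftl k (int (k - 1 - t)) p = map (\<lambda>d. cyc k p (int ?j + int (t * ?j + d))) [0..<?j]"
    if t: "t < k" for t
  proof (rule nth_equalityI)
    fix d assume "d < length (cshiftl k (int (k - 1 - t)) p)"
    then have d: "d < ?j" by (simp add: cshiftl_def)
    have e: "int ?j + int (t * ?j + d) = int d + int ?j * (int t + 1)"
      by (simp add: algebra_simps)
    have "cyc k p (int ?j + int (t * ?j + d)) = cshift k (- (int t + 1)) (p ! d)"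
      unfolding e cyc_add_mult[OF assms(1,2)] cyc_of_nat[OF assms(3) d] by simp
    also have "\<dots> = cshift k (int (k - 1 - t)) (p ! d)"
      by (rule cshift_cong) (use t in \<open>simp add: of_nat_diff mod_eq_dvd_iff\<close>)
    finally show "cshiftl k (int (k - 1 - t)) p ! d = map (\<lambda>d. cyc k p (int ?j + int (t * ?j + d))) [0..<?j] ! d"
      using d by (simp add: cshiftl_def)
  qed (simp add: cshiftl_def)
  have "rho k p = concat (map (\<lambda>t. map (\<lambda>d. cyc k p (int ?j + int (t * ?j + d))) [0..<?j]) [0..<k])"
    unfolding rho_def by (intro arg_cong[where f=concat] map_cong refl block) simp
  also have "\<dots> = map (\<lambda>n. cyc k p (int ?j + int n)) [0..<k * ?j]"
    by (rule concat_map_blocks)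
  finally show ?thesis .
qed

lemma rget_eq_cyc:
  assumes "p \<noteq> []" "0 < k" "colours_below k p"
  shows "rget k p t = cyc k p (int (length p) + t - 1)"
proof -
  let ?j = "length p"
  let ?N = "int (k * ?j)"
  have "length (rho k p) = k * ?j" using rho_eq_map_cyc[OF assms] by simp
  moreover have "nat ((t - 1) mod ?N) < k * ?j" using assms by (simp add: nat_less_iff)
  ultimately have "rget k p t = cyc k p (int ?j + (t - 1) mod ?N)"
    unfolding rget_def using rho_eq_map_cyc[OF assms] assms by simp
  also have "\<dots> = cyc k p (int ?j + (t - 1) mod ?N + int (?j * k) * ((t - 1) div ?N))"
    using cyc_period[OF assms(1,2)] by simp
  also have "int ?j + (t - 1) mod ?N + int (?j * k) * ((t - 1) div ?N) = int ?j + t - 1"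
    by (metis add.assoc add_diff_eq mod_mult_div_eq mult.commute)
  finally show ?thesis .
qed

lemma rho_sub_eq_window:
  assumes "p \<noteq> []" "0 < k" "colours_below k p"
  shows "rho_sub k p i = window k p (int i) (length p - 1)"
  by (rule nth_equalityI) (auto simp: length_rho_sub rho_sub_def rget_eq_cyc[OF assms] algebra_simps)

lemma clist_recursion:
  assumes "2 \<le> length p" "0 < k" "colours_below k p"
  shows "clist k p = concat (map (\<lambda>i. map (\<lambda>q. q @ [cyc k p (int (length p) + int i - 1)])
             (clist k (window k p (int i) (length p - 1)))) (rev [1..<k * length p + 1]))"
proof -
  have pne: "p \<noteq> []" using assms by auto
  have "clist k p = concat (map (\<lambda>i. map (\<lambda>q. q @ [rget k p (int i)])
      (clist k (rho_sub k p i))) (rev [1..<k * length p + 1]))"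
    using assms(1) clist.simps[of k p] by simp
  then show ?thesis
    by (simp only: rho_sub_eq_window[OF pne assms(2,3)] rget_eq_cyc[OF pne assms(2,3)])
qed

lemma clist_singleton: "clist k [e] = map (\<lambda>s. [cshift k (int s) e]) [0..<k]"
  by (simp add: clist.simps cshiftl_def)

section \<open>Flip listings\<close>

definition flip_succ :: "nat \<Rightarrow> centry list \<Rightarrow> centry list \<Rightarrow> centry list \<Rightarrow> bool" where
  "flip_succ k p a b \<longleftrightarrow> (\<forall>l. max_decr_prefix k p a l \<longrightarrow> b = flip k l a)"

text \<open>The last entry is pinned down so that its full flip is p again, which closes the
  listing into a cycle.\<close>

definition flip_listing :: "nat \<Rightarrow> centry list \<Rightarrow> centry list list \<Rightarrow> bool" where
  "flip_listing k p L \<longleftrightarrow> L \<noteq> [] \<and> distinct L \<and> hd L = p \<and> last L = rev (map (cshift k (-1)) p) \<and>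
     (\<forall>e\<in>set L. length e = length p \<and> fst ` set e = fst ` set p \<and> colours_below k e) \<and>
     successively (flip_succ k p) L"

lemma flip_listingD:
  assumes "flip_listing k p L"
  shows "L \<noteq> []" "distinct L" "hd L = p" "last L = rev (map (cshift k (-1)) p)"
    and "\<And>e. e \<in> set L \<Longrightarrow> length e = length p"
    and "\<And>e. e \<in> set L \<Longrightarrow> fst ` set e = fst ` set p"
    and "\<And>e. e \<in> set L \<Longrightarrow> colours_below k e"
    and "successively (flip_succ k p) L"
  using assms unfolding flip_listing_def by blast+

lemma flip_listing_singleton:
  assumes "0 < k" "snd e < k"
  shows "flip_listing k [e] (clist k [e])"
proof -
  define f where "f s = [cshift k (int s) e]" for s :: nat
  have L: "clist k [e] = map f [0..<k]"
    unfolding clist_singleton f_def ..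
  have "inj_on f {0..<k}"
    by (rule inj_onI) (auto simp: f_def cshift_eq_iff[OF assms(1)])
  then have "distinct (clist k [e])" unfolding L by (simp add: distinct_map)
  moreover have "hd (clist k [e]) = [e]"
    using assms by (simp add: L f_def hd_map cshift_0)
  moreover have "last (clist k [e]) = rev (map (cshift k (-1)) [e])"
    using assms(1) by (simp add: L f_def last_map cshift_minus_one)
  moreover have "\<forall>x\<in>set (clist k [e]). length x = 1 \<and> fst ` set x = {fst e} \<and> colours_below k x"
    by (auto simp: L f_def colours_below_def snd_cshift_less[OF assms(1)])
  moreover have "flip_succ k [e] (f s) (f (Suc s))" for s
    by (auto simp: flip_succ_def max_decr_prefix_def f_def flip_def cshiftl_def
        cshift_cshift[OF assms(1)] add.commute)
  then have "successively (flip_succ k [e]) (clist k [e])"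
    unfolding L successively_map by (simp add: successively_conv_nth)
  ultimately show ?thesis using assms(1) by (simp add: flip_listing_def L)
qed

lemma flip_snoc: "l \<le> length a \<Longrightarrow> flip k l (a @ [x]) = flip k l a @ [x]"
  by (simp add: flip_def)

text \<open>The whole word is decreasing, so l = |p|, and the flip undoes both the reversal and
  the colour shift.\<close>

lemma flip_rev_window:
  assumes "0 < k" "p \<noteq> []" "max_decr_prefix k p (rev (window k p (s + int (length p)) (length p))) l"
  shows "flip k l (rev (window k p (s + int (length p)) (length p))) = window k p s (length p)"
proof -
  let ?a = "rev (window k p (s + int (length p)) (length p))"
  have "decr_wrt k p ?a" unfolding decr_wrt_def by auto
  then have l: "l = length p"
    using assms(3) unfolding max_decr_prefix_def by (metis le_neq_implies_less length_rev
      length_window order_refl take_all)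
  have "flip k l ?a = map (cshift k 1) (window k p (s + int (length p)) (length p))"
    unfolding l flip_def cshiftl_def by (simp add: rev_map)
  also have "\<dots> = window k p s (length p)"
    using map_cshift_window[OF assms(2,1), of "-1" "s + int (length p)" "length p"] by simp
  finally show ?thesis .
qed

locale clist_step =
  fixes k :: nat and p :: "centry list"
  assumes k_pos: "0 < k" and colours_p: "colours_below k p" and distinct_p: "distinct (map fst p)"
    and two_le_length: "2 \<le> length p"
begin

text \<open>sub i and entry i are rho(p)_i and r_i (rho_sub_eq_window, rget_eq_cyc), and C(p) is the
  concatenation of the blocks for i = k|p|, ..., 1.\<close>

definition sub :: "nat \<Rightarrow> centry list" where
  "sub i = window k p (int i) (length p - 1)"

definition entry :: "nat \<Rightarrow> centry" where
  "entry i = cyc k p (int (length p) + int i - 1)"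

definition block :: "nat \<Rightarrow> centry list list" where
  "block i = map (\<lambda>q. q @ [entry i]) (clist k (sub i))"

lemma p_nonempty: "p \<noteq> []"
  using two_le_length by auto

lemma clist_eq_concat_blocks: "clist k p = concat (map block (rev [1..<k * length p + 1]))"
  unfolding clist_recursion[OF two_le_length k_pos colours_p] block_def entry_def sub_def ..

lemma window_eq_sub_snoc: "window k p (int i) (length p) = sub i @ [entry i]"
proof -
  have "length p = Suc (length p - 1)" using two_le_length by simp
  then have "window k p (int i) (length p) = window k p (int i) (Suc (length p - 1))" by simp
  also have "\<dots> = sub i @ [entry i]"
    unfolding window_Suc sub_def entry_def using two_le_length by (simp add: algebra_simps)
  finally show ?thesis .
qed

lemma length_sub: "length (sub i) = length p - 1"
  by (simp add: sub_def)

lemma colours_below_sub: "colours_below k (sub i)"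
  unfolding sub_def by (rule colours_below_window[OF k_pos])

lemma distinct_sub_entry: "distinct (map fst (sub i) @ [fst (entry i)])"
  using distinct_map_fst_window[OF p_nonempty k_pos colours_p distinct_p, of "int i"]
  by (simp add: window_eq_sub_snoc)

lemma fst_set_sub_entry: "fst ` set (sub i) \<union> {fst (entry i)} = fst ` set p"
  using fst_set_window[OF p_nonempty k_pos colours_p, of "int i"]
  by (simp add: window_eq_sub_snoc Un_commute)

lemma entry_inj:
  assumes "i \<in> {1..k * length p}" "i' \<in> {1..k * length p}" "entry i = entry i'"
  shows "i = i'"
proof -
  obtain m where m: "int (length p) + int i' - 1 = int (length p) + int i - 1 + int (length p * k) * m"
    using cyc_eq_imp_period[OF p_nonempty k_pos distinct_p assms(3)[unfolded entry_def]] by blast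
  then have "int (k * length p) * m = int i' - int i" by (simp add: algebra_simps)
  moreover have "\<bar>int i' - int i\<bar> < int (k * length p)"
    using assms(1,2) by (simp only: atLeastAtMost_iff abs_less_iff) linarith
  ultimately have "int (k * length p) * \<bar>m\<bar> < int (k * length p) * 1"
    by (simp add: abs_mult)
  moreover have "0 < int (k * length p)" using k_pos p_nonempty by simp
  ultimately have "\<bar>m\<bar> < 1" by (simp only: mult_less_cancel_left_pos)
  then have "m = 0" by simp
  then show "i = i'" using m by simp
qed

lemma decr_wrt_sub_iff:
  assumes "fst ` set q \<subseteq> fst ` set (sub i)"
  shows "decr_wrt k (sub i) q \<longleftrightarrow> decr_wrt k p q"
proof -
  let ?u = "window k p (int i) (length p)"
  have "fst (entry i) \<notin> fst ` set (sub i)" using distinct_sub_entry[of i] by auto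
  then have "fst (last ?u) \<notin> fst ` set q" using assms by (auto simp: window_eq_sub_snoc)
  then have "decr_wrt k (butlast ?u) q \<longleftrightarrow> decr_wrt k ?u q"
    using decr_wrt_butlast[OF colours_below_window[OF k_pos] k_pos] two_le_length by simp
  also have "\<dots> \<longleftrightarrow> decr_wrt k p q" by (rule decr_wrt_window[OF p_nonempty k_pos])
  finally show ?thesis by (simp add: window_eq_sub_snoc)
qed

lemma max_decr_prefix_sub:
  assumes "max_decr_prefix k p (a @ [x]) l" "l < length p" "length a = length p - 1"
    and "fst ` set a \<subseteq> fst ` set (sub i)"
  shows "max_decr_prefix k (sub i) a l"
proof -
  have eq: "decr_wrt k (sub i) (take m a) \<longleftrightarrow> decr_wrt k p (take m (a @ [x]))"
    if "m \<le> length p - 1" for m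
  proof -
    have "fst ` set (take m a) \<subseteq> fst ` set (sub i)"
      using assms(4) set_take_subset by (metis image_mono order_trans)
    then show ?thesis using that assms(3) by (simp add: decr_wrt_sub_iff)
  qed
  have "1 \<le> l" "decr_wrt k p (take l (a @ [x]))"
    "\<And>l'. l < l' \<Longrightarrow> l' \<le> length p \<Longrightarrow> \<not> decr_wrt k p (take l' (a @ [x]))"
    using assms(1) unfolding max_decr_prefix_def by auto
  then show ?thesis
    unfolding max_decr_prefix_def length_sub using eq assms(2) by auto
qed

lemma decr_wrt_snoc_entry:
  assumes "decr_wrt k p (a @ [entry i])" "length a = length p - 1"
  shows "a = rev (window k p (int i + int (length p)) (length p - 1))"
proof -
  obtain s where s: "subseq (a @ [entry i]) (rev (window k p s (length p)))"
    using assms(1) unfolding decr_wrt_def by blast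
  moreover have "length (a @ [entry i]) = length (rev (window k p s (length p)))"
    using assms(2) two_le_length by simp
  ultimately have eq: "a @ [entry i] = rev (window k p s (length p))"
    using subseq_same_length by blast
  have "length p = Suc (length p - 1)" using two_le_length by simp
  then have "window k p s (length p) = cyc k p s # window k p (s + 1) (length p - 1)"
    by (metis window_Suc_Cons)
  then have a: "a = rev (window k p (s + 1) (length p - 1))" and x: "entry i = cyc k p s"
    using eq by simp_all
  obtain m where "int (length p) + int i - 1 = s + int (length p * k) * m"
    using cyc_eq_imp_period[OF p_nonempty k_pos distinct_p x[unfolded entry_def, symmetric]] by blast
  then have "s + 1 = (int i + int (length p)) + int (length p * k) * (- m)" by simp
  then show ?thesis
    using a window_period[OF p_nonempty k_pos] by metis
qed

end

locale clist_step_ind = clist_step +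
  assumes flip_listing_sub: "flip_listing k (sub i) (clist k (sub i))"
begin

lemma block_nonempty: "block i \<noteq> []"
  using flip_listingD(1)[OF flip_listing_sub] by (simp add: block_def)

lemma hd_block: "hd (block i) = window k p (int i) (length p)"
  using flip_listingD(1,3)[OF flip_listing_sub]
  by (simp add: block_def hd_map window_eq_sub_snoc)

lemma last_clist_sub: "last (clist k (sub i)) = rev (window k p (int i + int (length p)) (length p - 1))"
  using flip_listingD(4)[OF flip_listing_sub, of i]
    map_cshift_window[OF p_nonempty k_pos, of 1 "int i" "length p - 1"]
  by (simp add: sub_def)

lemma last_block: "last (block i) = rev (window k p (int i + int (length p)) (length p - 1)) @ [entry i]"
  using flip_listingD(1)[OF flip_listing_sub] by (simp add: block_def last_map last_clist_sub)

lemma last_block_Suc: "last (block (Suc i)) = rev (window k p (int i + int (length p)) (length p))"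
proof -
  have "length p = Suc (length p - 1)" using two_le_length by simp
  then have "window k p (int i + int (length p)) (length p) =
      cyc k p (int i + int (length p)) # window k p (int i + int (length p) + 1) (length p - 1)"
    by (metis window_Suc_Cons)
  then show ?thesis by (simp add: last_block entry_def algebra_simps)
qed

lemma mem_block: "e \<in> set (block i) \<Longrightarrow> \<exists>q\<in>set (clist k (sub i)). e = q @ [entry i]"
  by (auto simp: block_def)

lemma block_inj: "i \<in> {1..k * length p} \<Longrightarrow> i' \<in> {1..k * length p} \<Longrightarrow> i \<noteq> i' \<Longrightarrow>
    set (block i) \<inter> set (block i') = {}"
  using entry_inj by (fastforce dest!: mem_block)

lemma distinct_clist: "distinct (clist k p)"
  unfolding clist_eq_concat_blocks
proof (rule distinct_concat)
  have idx: "set (rev [1..<k * length p + 1]) = {1..k * length p}"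
    by (auto simp del: upt_Suc)
  have "inj_on block {1..k * length p}"
    using block_inj block_nonempty by (fastforce intro: inj_onI)
  then show "distinct (map block (rev [1..<k * length p + 1]))"
    unfolding distinct_map idx by simp
  show "distinct ys" if "ys \<in> set (map block (rev [1..<k * length p + 1]))" for ys
    using that flip_listingD(2)[OF flip_listing_sub] by (auto simp: block_def distinct_map inj_on_def)
  show "set ys \<inter> set zs = {}"
    if ys: "ys \<in> set (map block (rev [1..<k * length p + 1]))"
      and zs: "zs \<in> set (map block (rev [1..<k * length p + 1]))" and ne: "ys \<noteq> zs" for ys zs
  proof -
    obtain i i' where "i \<in> {1..k * length p}" "i' \<in> {1..k * length p}" "ys = block i" "zs = block i'"
      using ys zs unfolding set_map idx by blast
    then show ?thesis using ne block_inj by blast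
  qed
qed

lemma hd_clist: "hd (clist k p) = p"
proof -
  have "rev [1..<k * length p + 1] = k * length p # rev [1..<k * length p]"
    using k_pos two_le_length by simp
  then have "hd (clist k p) = hd (block (k * length p))"
    using block_nonempty by (simp add: clist_eq_concat_blocks)
  also have "\<dots> = window k p (0 + int (length p * k) * 1) (length p)"
    by (simp add: hd_block mult.commute)
  also have "\<dots> = p"
    by (simp only: window_period[OF p_nonempty k_pos] window_0[OF colours_p])
  finally show ?thesis .
qed

lemma last_clist: "last (clist k p) = rev (map (cshift k (-1)) p)"
proof -
  have "1 < k * length p + 1" using k_pos p_nonempty by simp
  then have "[1..<k * length p + 1] = 1 # [Suc 1..<k * length p + 1]"
    by (rule upt_conv_Cons)
  then have "rev [1..<k * length p + 1] = rev [Suc 1..<k * length p + 1] @ [1]"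
    by simp
  then have "last (clist k p) = last (block (Suc 0))"
    using block_nonempty by (simp add: clist_eq_concat_blocks)
  also have "\<dots> = rev (window k p (0 + int (length p)) (length p))"
    using last_block_Suc[of 0] by simp
  also have "window k p (0 + int (length p)) (length p) = map (cshift k (-1)) p"
    using map_cshift_window[OF p_nonempty k_pos, of 1 0 "length p"] window_0[OF colours_p] by simp
  finally show ?thesis .
qed

lemma clist_elements:
  assumes "e \<in> set (clist k p)"
  shows "length e = length p \<and> fst ` set e = fst ` set p \<and> colours_below k e"
proof -
  obtain i where "e \<in> set (block i)"
    using assms by (auto simp: clist_eq_concat_blocks)
  then obtain q where q: "q \<in> set (clist k (sub i))" "e = q @ [entry i]"
    using mem_block by blast
  moreover have "snd (entry i) < k" unfolding entry_def by (rule snd_cyc_less[OF k_pos])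
  ultimately show ?thesis
    using flip_listingD(5-7)[OF flip_listing_sub q(1)] fst_set_sub_entry[of i] two_le_length
    by (auto simp: colours_below_def length_sub)
qed

lemma flip_succ_snoc_entry:
  assumes "a \<in> set (clist k (sub i))" "a \<noteq> last (clist k (sub i))" "flip_succ k (sub i) a b"
  shows "flip_succ k p (a @ [entry i]) (b @ [entry i])"
  unfolding flip_succ_def
proof (intro allI impI)
  fix l assume max: "max_decr_prefix k p (a @ [entry i]) l"
  have len: "length a = length p - 1" and fsts: "fst ` set a = fst ` set (sub i)"
    using flip_listingD(5,6)[OF flip_listing_sub assms(1)] by (simp_all add: length_sub)
  have "l \<noteq> length p"
  proof
    assume "l = length p"
    then have "decr_wrt k p (a @ [entry i])"
      using max len two_le_length by (simp add: max_decr_prefix_def)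
    then have "a = last (clist k (sub i))"
      using decr_wrt_snoc_entry[OF _ len] by (simp add: last_clist_sub)
    then show False using assms(2) by contradiction
  qed
  then have "l < length p" using max by (simp add: max_decr_prefix_def)
  then have "max_decr_prefix k (sub i) a l"
    using max_decr_prefix_sub[OF max _ len] fsts by simp
  then have "b = flip k l a" using assms(3) by (simp add: flip_succ_def)
  then show "b @ [entry i] = flip k l (a @ [entry i])"
    using \<open>l < length p\<close> len by (simp add: flip_snoc)
qed

lemma successively_block: "successively (flip_succ k p) (block i)"
proof -
  have "successively (\<lambda>a b. flip_succ k (sub i) a b \<and> a \<noteq> last (clist k (sub i))) (clist k (sub i))"
    using flip_listingD(2,8)[OF flip_listing_sub] by (rule successively_not_last)
  then show ?thesis
    unfolding block_def successively_map by (rule successively_mono) (simp add: flip_succ_snoc_entry)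
qed

lemma flip_succ_last_block_hd_block: "flip_succ k p (last (block (Suc i))) (hd (block i))"
  unfolding flip_succ_def last_block_Suc hd_block
  using flip_rev_window[OF k_pos p_nonempty] by simp

lemma successively_clist: "successively (flip_succ k p) (clist k p)"
  unfolding clist_eq_concat_blocks
proof (rule successively_concat)
  show "\<forall>xs\<in>set (map block (rev [1..<k * length p + 1])). xs \<noteq> []"
    using block_nonempty by simp
  show "\<forall>xs\<in>set (map block (rev [1..<k * length p + 1])). successively (flip_succ k p) xs"
    using successively_block by simp
  have "successively (\<lambda>i i'. flip_succ k p (last (block i')) (hd (block i))) [1..<k * length p + 1]"
    unfolding successively_conv_nth using flip_succ_last_block_hd_block by (simp del: upt_Suc)
  then show "successively (\<lambda>xs ys. flip_succ k p (last xs) (hd ys)) (map block (rev [1..<k * length p + 1]))"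
    by (simp add: successively_map)
qed

lemma clist_nonempty: "clist k p \<noteq> []"
proof -
  have "block (k * length p) \<in> set (map block (rev [1..<k * length p + 1]))"
    using k_pos two_le_length by simp
  then show ?thesis
    unfolding clist_eq_concat_blocks using block_nonempty by (metis concat_eq_Nil_conv)
qed

lemma flip_listing_clist_step: "flip_listing k p (clist k p)"
  unfolding flip_listing_def
  using clist_nonempty distinct_clist hd_clist last_clist clist_elements successively_clist by blast

end

theorem flip_listing_clist:
  assumes "0 < k" "p \<noteq> []" "colours_below k p" "distinct (map fst p)"
  shows "flip_listing k p (clist k p)"
  using assms(2-4)
proof (induction "length p" arbitrary: p rule: less_induct)
  case less
  show ?case
  proof (cases "length p = 1")
    case True
    then obtain e where "p = [e]" by (auto simp: length_Suc_conv)
    then show ?thesis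
      using flip_listing_singleton[OF assms(1)] less.prems(2) by (simp add: colours_below_def)
  next
    case False
    with less.prems(1) have "2 \<le> length p" by (cases p) (auto simp: Suc_le_eq)
    then interpret clist_step k p
      using assms(1) less.prems by unfold_locales
    interpret clist_step_ind k p
    proof unfold_locales
      fix i
      have "sub i \<noteq> []" using two_le_length length_sub[of i] by (cases "sub i") auto
      then show "flip_listing k (sub i) (clist k (sub i))"
        using less.hyps[of "sub i"] p_nonempty colours_below_sub distinct_sub_entry[of i]
        by (simp add: length_sub)
    qed
    show ?thesis by (rule flip_listing_clist_step)
  qed
qed

lemma flip_listing_successor:
  assumes "flip_listing k p L" "0 < k" "colours_below k p"
    and "i < length L" "max_decr_prefix k p (L ! i) l"
  shows "L ! ((i + 1) mod length L) = flip k l (L ! i)"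
proof (cases "Suc i < length L")
  case True
  then show ?thesis
    using successively_nth[OF flip_listingD(8)[OF assms(1)] True] assms(5)
    by (simp add: flip_succ_def)
next
  case False
  then have "i = length L - 1" using assms(4) by simp
  then have last: "L ! i = last L" and first: "L ! ((i + 1) mod length L) = hd L"
    using assms(4) flip_listingD(1)[OF assms(1)] by (simp_all add: last_conv_nth hd_conv_nth)
  have pne: "p \<noteq> []"
    using assms(5) by (auto simp: max_decr_prefix_def)
  have "map (cshift k (-1)) p = window k p (0 + int (length p)) (length p)"
    using map_cshift_window[OF pne assms(2), of 1 0 "length p"] window_0[OF assms(3)] by simp
  then have "L ! i = rev (window k p (0 + int (length p)) (length p))"
    using last flip_listingD(4)[OF assms(1)] by simp
  then show ?thesis
    using flip_rev_window[OF assms(2) pne, of 0 l] assms(5) first flip_listingD(3)[OF assms(1)]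
      window_0[OF assms(3)] by simp
qed

section \<open>Increasing and decreasing permutations\<close>

lemma rget_idperm_eq_window:
  assumes "1 \<le> n" "0 < k"
  shows "map (\<lambda>d. rget k (idperm n) (i + int d)) [0..<n] = window k (idperm n) (int n + i - 1) n"
proof -
  have "idperm n \<noteq> []" "length (idperm n) = n" "colours_below k (idperm n)"
    using assms by (auto simp: idperm_def colours_below_def)
  then show ?thesis
    unfolding window_def by (simp add: rget_eq_cyc[OF _ assms(2)] algebra_simps)
qed

lemma increasing_iff_window:
  assumes "1 \<le> n" "0 < k"
  shows "increasing n k p \<longleftrightarrow> (\<exists>s. p = window k (idperm n) s n)"
proof
  assume "increasing n k p"
  then show "\<exists>s. p = window k (idperm n) s n"
    unfolding increasing_def rget_idperm_eq_window[OF assms] by blast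
next
  assume "\<exists>s. p = window k (idperm n) s n"
  then obtain s where "p = window k (idperm n) (int n + (s - int n + 1) - 1) n" by auto
  then show "increasing n k p"
    unfolding increasing_def rget_idperm_eq_window[OF assms] by blast
qed

lemma subseq_decreasing_iff:
  assumes "1 \<le> n" "0 < k"
  shows "(\<exists>p. decreasing n k p \<and> subseq q p) \<longleftrightarrow> decr_wrt k (idperm n) q"
proof -
  have "length (idperm n) = n" by (simp add: idperm_def)
  then show ?thesis
    unfolding decreasing_def increasing_iff_window[OF assms] decr_wrt_def
    by (metis rev_rev_ident)
qed

lemma decreasing_pre_iff_decr_wrt:
  assumes "1 \<le> n" "0 < k" "increasing n k \<pi>" "e \<in> cperms n k" "1 \<le> l" "l \<le> n"
  shows "decreasing_pre n k (take l e) \<longleftrightarrow> decr_wrt k \<pi> (take l e)"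
proof -
  have "preperm n k (take l e)" unfolding preperm_def using assms(4-6) by blast
  moreover obtain s where "\<pi> = window k (idperm n) s n"
    using assms(3) increasing_iff_window[OF assms(1,2)] by blast
  moreover have "idperm n \<noteq> []" "length (idperm n) = n" using assms(1) by (auto simp: idperm_def)
  ultimately show ?thesis
    unfolding decreasing_pre_def subseq_decreasing_iff[OF assms(1,2)]
    using decr_wrt_window[OF _ assms(2)] by metis
qed

lemma cperms_flip_listing:
  assumes "\<pi> \<in> cperms n k" "flip_listing k \<pi> L" "e \<in> set L"
  shows "e \<in> cperms n k"
proof -
  have len: "length e = n" and fsts: "set (map fst e) = {1..n}"
    using flip_listingD(5,6)[OF assms(2,3)] assms(1) by (auto simp: cperms_def)
  then have "distinct (map fst e)" by (simp add: card_distinct)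
  then show ?thesis
    using len fsts flip_listingD(7)[OF assms(2,3)] by (simp add: cperms_def colours_below_def)
qed

theorem lemma6:
  fixes n k :: nat and \<pi> :: "centry list" and i j :: nat
  assumes "n \<ge> 1" and "k \<ge> 1"
    and "\<pi> \<in> cperms n k" and "increasing n k \<pi>"
    and "i < length (clist k \<pi>)"
    and "1 \<le> j" and "j \<le> n"
    and "decreasing_pre n k (take j (clist k \<pi> ! i))"
    and "\<forall>j'. j < j' \<and> j' \<le> n \<longrightarrow> \<not> decreasing_pre n k (take j' (clist k \<pi> ! i))"
  shows "clist k \<pi> ! ((i + 1) mod length (clist k \<pi>)) = flip k j (clist k \<pi> ! i)"
proof -
  have k: "0 < k" using assms(2) by simp
  have len: "length \<pi> = n" and colours: "colours_below k \<pi>" and dist: "distinct (map fst \<pi>)"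
    using assms(3) by (auto simp: cperms_def colours_below_def)
  moreover have "\<pi> \<noteq> []" using len assms(1) by auto
  ultimately have listing: "flip_listing k \<pi> (clist k \<pi>)"
    using flip_listing_clist[OF k] by blast
  have "clist k \<pi> ! i \<in> cperms n k"
    using cperms_flip_listing[OF assms(3) listing] assms(5) by simp
  then have "max_decr_prefix k \<pi> (clist k \<pi> ! i) j"
    using assms(6-9) decreasing_pre_iff_decr_wrt[OF assms(1) k assms(4)]
    unfolding max_decr_prefix_def len by auto
  then show ?thesis
    using flip_listing_successor[OF listing k colours assms(5)] by simp
qed
end
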